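(* Let $r\in\{-1,+1\}$ and $\Phi=rD_\phi$, i.e. $\Phi(x,y)=rD_\phi(x,y)$ on $\mathbb R^n\times\mathbb R^n$. For any proper $f:\mathbb R^n\to\overline{\mathbb R}$ the following are equivalent: (i) $f$ is lsc and $f-r\phi$ is convex; (ii) $f$ is left $\Phi$-convex; (iii) $f=-\overleftarrow{\mathrm{env}}_\phi(-\overrightarrow{\mathrm{env}}_\phi f)$ if $r=-1$, resp. $f=\overleftarrow{\mathrm{klee}}_\phi(\overrightarrow{\mathrm{klee}}_\phi f)$ if $r=+1$; (iv) there is $g:\mathbb R^n\to\overline{\mathbb R}$ with $f=-\overleftarrow{\mathrm{env}}_\phi g$ if $r=-1$, resp. $f=\overleftarrow{\mathrm{klee}}_\phi g$ if $r=+1$; (v) $f$ is the pointwise supremum of all functions of the form $r\phi+\langle v,\cdot\rangle+\delta$, $(v,\delta)\in\mathbb R^n\times\overline{\mathbb R}$, that are majorized by $f$; (vi) $f$ is lsc and $\partial_\Phi f(x)=\nabla\phi^*(\nabla\phi(x)-r\partial f(x))$ for all $x\in\mathbb R^n$.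
   Context: Standing assumption: $\phi:\mathbb R^n\to\mathbb R$ is convex, finite-valued, differentiable and strictly convex (Legendre with full domain), super-coercive; $\phi^*$ has the same properties and $\nabla\phi^*=(\nabla\phi)^{-1}$. $D_\phi(x,y)=\phi(x)-\phi(y)-\langle\nabla\phi(y),x-y\rangle$. $\partial f$ is the limiting subdifferential. Envelopes: $\overrightarrow{\mathrm{env}}_\phi f(y)=\inf_x\{f(x)+D_\phi(x,y)\}$, $\overleftarrow{\mathrm{env}}_\phi g(x)=\inf_y\{g(y)+D_\phi(x,y)\}$, $\overrightarrow{\mathrm{klee}}_\phi f(y)=\sup_x\{D_\phi(x,y)-f(x)\}$, $\overleftarrow{\mathrm{klee}}_\phi g(x)=\sup_y\{D_\phi(x,y)-g(y)\}$. Left $\Phi$-convex: $f=\sup_{i\in I}\Phi(\cdot,y_i)-\beta_i$ for some family $(y_i,\beta_i)\in\mathbb R^n\times\overline{\mathbb R}$ ($f\equiv-\infty$ if $I=\emptyset$). $\Phi$-subdifferential: for $\bar x\in\operatorname{dom}f$, $\partial_\Phi f(\bar x)=\{\bar y: f(x)\ge f(\bar x)+\Phi(x,\bar y)-\Phi(\bar x,\bar y)\ \forall x\}$, and $\partial_\Phi f(\bar x)=\emptyset$ if $\bar x\notin\operatorname{dom} f$. *)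

theory Defs
  imports "HOL-Analysis.Analysis" "HOL-Library.Extended_Real"
begin

definition strictly_convex_fun :: "('a::real_vector \<Rightarrow> real) \<Rightarrow> bool" where
  "strictly_convex_fun g \<longleftrightarrow>
     (\<forall>x y t. x \<noteq> y \<and> 0 < t \<and> t < 1 \<longrightarrow>
        g (t *\<^sub>R x + (1 - t) *\<^sub>R y) < t * g x + (1 - t) * g y)"

definition super_coercive :: "('a::real_normed_vector \<Rightarrow> real) \<Rightarrow> bool" where
  "super_coercive g \<longleftrightarrow> filterlim (\<lambda>x. g x / norm x) at_top at_infinity"

definition legendre_full :: "('a::euclidean_space \<Rightarrow> real) \<Rightarrow> ('a \<Rightarrow> 'a) \<Rightarrow> bool" where
  "legendre_full phi gphi \<longleftrightarrow>
     convex_on UNIV phi \<and> strictly_convex_fun phi \<and> super_coercive phi \<and>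
     (\<forall>x. (phi has_derivative (\<lambda>h. gphi x \<bullet> h)) (at x)) \<and> bij gphi"

definition bregman :: "('a::euclidean_space \<Rightarrow> real) \<Rightarrow> ('a \<Rightarrow> 'a) \<Rightarrow> 'a \<Rightarrow> 'a \<Rightarrow> real" where
  "bregman phi gphi x y = phi x - phi y - gphi y \<bullet> (x - y)"

definition fenv :: "('a::euclidean_space \<Rightarrow> real) \<Rightarrow> ('a \<Rightarrow> 'a) \<Rightarrow> ('a \<Rightarrow> ereal) \<Rightarrow> 'a \<Rightarrow> ereal" where
  "fenv phi gphi f y = (INF x. f x + ereal (bregman phi gphi x y))"

definition benv :: "('a::euclidean_space \<Rightarrow> real) \<Rightarrow> ('a \<Rightarrow> 'a) \<Rightarrow> ('a \<Rightarrow> ereal) \<Rightarrow> 'a \<Rightarrow> ereal" where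
  "benv phi gphi g x = (INF y. g y + ereal (bregman phi gphi x y))"

definition fklee :: "('a::euclidean_space \<Rightarrow> real) \<Rightarrow> ('a \<Rightarrow> 'a) \<Rightarrow> ('a \<Rightarrow> ereal) \<Rightarrow> 'a \<Rightarrow> ereal" where
  "fklee phi gphi f y = (SUP x. ereal (bregman phi gphi x y) - f x)"

definition bklee :: "('a::euclidean_space \<Rightarrow> real) \<Rightarrow> ('a \<Rightarrow> 'a) \<Rightarrow> ('a \<Rightarrow> ereal) \<Rightarrow> 'a \<Rightarrow> ereal" where
  "bklee phi gphi g x = (SUP y. ereal (bregman phi gphi x y) - g y)"

definition proper_fun :: "('a \<Rightarrow> ereal) \<Rightarrow> bool" where
  "proper_fun f \<longleftrightarrow> (\<forall>x. f x \<noteq> -\<infinity>) \<and> (\<exists>x. f x \<noteq> \<infinity>)"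

definition lsc_fun :: "('a::topological_space \<Rightarrow> ereal) \<Rightarrow> bool" where
  "lsc_fun f \<longleftrightarrow> (\<forall>x. f x \<le> Liminf (at x) f)"

definition ext_convex :: "('a::real_vector \<Rightarrow> ereal) \<Rightarrow> bool" where
  "ext_convex f \<longleftrightarrow> convex {(x, \<mu>::real). f x \<le> ereal \<mu>}"

definition left_Phi_convex :: "('a \<Rightarrow> 'a \<Rightarrow> real) \<Rightarrow> ('a \<Rightarrow> ereal) \<Rightarrow> bool" where
  "left_Phi_convex Phi f \<longleftrightarrow>
     (\<exists>S :: ('a \<times> ereal) set. \<forall>x. f x = (SUP p\<in>S. ereal (Phi x (fst p)) - snd p))"

definition Phi_subdiff :: "('a \<Rightarrow> 'a \<Rightarrow> real) \<Rightarrow> ('a \<Rightarrow> ereal) \<Rightarrow> 'a \<Rightarrow> 'a set" where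
  "Phi_subdiff Phi f xb =
     (if f xb < \<infinity> then {yb. \<forall>x. f x \<ge> f xb + ereal (Phi x yb - Phi xb yb)} else {})"

definition frechet_subdiff :: "('a::euclidean_space \<Rightarrow> ereal) \<Rightarrow> 'a \<Rightarrow> 'a set" where
  "frechet_subdiff f xb =
     {v. \<bar>f xb\<bar> \<noteq> \<infinity> \<and>
         (\<forall>e>0. \<exists>d>0. \<forall>x. norm (x - xb) < d \<longrightarrow>
            f x \<ge> f xb + ereal (v \<bullet> (x - xb) - e * norm (x - xb)))}"

definition limiting_subdiff :: "('a::euclidean_space \<Rightarrow> ereal) \<Rightarrow> 'a \<Rightarrow> 'a set" where
  "limiting_subdiff f xb =
     {v. \<bar>f xb\<bar> \<noteq> \<infinity> \<and>
         (\<exists>xs vs. xs \<longlonglongrightarrow> xb \<and> (\<lambda>k. f (xs k)) \<longlonglongrightarrow> f xb \<and> vs \<longlonglongrightarrow> v \<and>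
                  (\<forall>k. vs k \<in> frechet_subdiff f (xs k)))}"

end

theory Submission
  imports Defs
begin

text \<open>
  Everything is read off \<open>g = f - r\<phi>\<close>. Since
  \<open>r D\<^sub>\<phi>(x,y) - \<beta> = r\<phi>(x) + \<langle>-r\<nabla>\<phi>(y), x\<rangle> + r(\<langle>\<nabla>\<phi>(y),y\<rangle> - \<phi>(y)) - \<beta>\<close>
  and \<open>\<nabla>\<phi>\<close> is bijective, the functions \<open>\<Phi>(\<cdot>,y) - \<beta>\<close> are exactly the functions
  \<open>r\<phi> + \<langle>v,\<cdot>\<rangle> + \<delta>\<close>: left \<open>\<Phi>\<close>-convexity of \<open>f\<close> says that \<open>g\<close> is the supremum of its
  affine minorants, and the envelope formulas are \<open>\<Phi>\<close>-biconjugation. A supremum of affine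
  functions is lsc and convex. For convex \<open>g\<close> the limiting subdifferential of \<open>f = g + r\<phi>\<close> is
  \<open>\<partial>g + r\<nabla>\<phi>\<close>, because \<open>\<nabla>\<phi>\<close> is continuous and the graph of \<open>\<partial>g\<close> is closed; this
  is the formula for \<open>\<partial>\<^sub>\<Phi>f\<close>. Conversely, that formula makes every Frechet subgradient of
  \<open>g\<close> a global affine support, and a proximal-point argument then shows that the lsc
  function \<open>g\<close> is the supremum of its affine minorants.
\<close>

section \<open>Lower semicontinuity\<close>

lemma lsc_fun_iff_nhds:
  "lsc_fun F \<longleftrightarrow> (\<forall>x y. y < F x \<longrightarrow> (\<forall>\<^sub>F z in nhds x. y < F z))"
  unfolding lsc_fun_def le_Liminf_iff eventually_nhds_conv_at by auto

lemma lsc_fun_add_continuous: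
  fixes F :: "'a::metric_space \<Rightarrow> ereal"
  assumes F: "lsc_fun F" and c: "continuous_on UNIV c"
  shows "lsc_fun (\<lambda>x. F x + ereal (c x))"
  unfolding lsc_fun_iff_nhds
proof (intro allI impI)
  fix x y assume "y < F x + ereal (c x)"
  then obtain t where t: "y < ereal t" "ereal t < F x + ereal (c x)" using ereal_dense2 by blast
  then obtain s where s: "ereal t < ereal s" "ereal s < F x + ereal (c x)" using ereal_dense2 by blast
  have "ereal (s - c x) < F x" using s(2) by (cases "F x") auto
  then have "\<forall>\<^sub>F z in nhds x. ereal (s - c x) < F z" using F unfolding lsc_fun_iff_nhds by blast
  moreover have "(c \<longlongrightarrow> c x) (nhds x)"
    using c by (simp add: continuous_on_eq_continuous_at isCont_def tendsto_at_iff_tendsto_nhds)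
  then have "\<forall>\<^sub>F z in nhds x. dist (c z) (c x) < s - t"
    using s(1) by (intro tendstoD) auto
  ultimately show "\<forall>\<^sub>F z in nhds x. y < F z + ereal (c z)"
  proof eventually_elim
    case (elim z)
    then have "ereal t < F z + ereal (c z)" by (cases "F z") (auto simp: dist_real_def)
    then show ?case using t(1) by (rule order.strict_trans[rotated])
  qed
qed

lemma lsc_fun_SUP:
  assumes "\<And>i. i \<in> I \<Longrightarrow> lsc_fun (F i)"
  shows "lsc_fun (\<lambda>x. SUP i\<in>I. F i x)"
  unfolding lsc_fun_iff_nhds
proof (intro allI impI)
  fix x y assume "y < (SUP i\<in>I. F i x)"
  then obtain i where i: "i \<in> I" "y < F i x" unfolding less_SUP_iff by blast
  then have "\<forall>\<^sub>F z in nhds x. y < F i z" using assms unfolding lsc_fun_iff_nhds by blast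
  then show "\<forall>\<^sub>F z in nhds x. y < (SUP i\<in>I. F i z)"
    by (rule eventually_mono) (use i(1) in \<open>auto intro: less_le_trans SUP_upper\<close>)
qed

lemma lsc_fun_open_superlevel:
  assumes "lsc_fun F"
  shows "open {z. a < F z}"
  unfolding open_subopen[of "{z. a < F z}"]
proof
  fix x assume "x \<in> {z. a < F z}"
  then have "\<forall>\<^sub>F z in nhds x. a < F z" using assms unfolding lsc_fun_iff_nhds by blast
  then show "\<exists>T. open T \<and> x \<in> T \<and> T \<subseteq> {z. a < F z}" unfolding eventually_nhds by blast
qed

lemma lsc_fun_attains_min:
  fixes F :: "'a::topological_space \<Rightarrow> ereal"
  assumes F: "lsc_fun F" and K: "compact K" "K \<noteq> {}"
  obtains x where "x \<in> K" "\<And>y. y \<in> K \<Longrightarrow> F x \<le> F y"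
proof -
  define m where "m = (INF y\<in>K. F y)"
  have "\<exists>x\<in>K. F x \<le> m"
  proof (rule ccontr)
    assume no_min: "\<not> (\<exists>x\<in>K. F x \<le> m)"
    have "K \<subseteq> (\<Union>a\<in>{a. m < ereal a}. {z. ereal a < F z})"
    proof
      fix x assume "x \<in> K"
      then have "m < F x" using no_min by (simp add: not_le)
      then show "x \<in> (\<Union>a\<in>{a. m < ereal a}. {z. ereal a < F z})" using ereal_dense2 by blast
    qed
    then obtain T where T: "T \<subseteq> {a. m < ereal a}" "finite T" "K \<subseteq> (\<Union>a\<in>T. {z. ereal a < F z})"
      using compactE_image[OF K(1), of "{a. m < ereal a}" "\<lambda>a. {z. ereal a < F z}"]
        lsc_fun_open_superlevel[OF F] by blast
    then have "T \<noteq> {}" using K(2) by auto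
    have "ereal (Min T) \<le> m"
      unfolding m_def
    proof (rule INF_greatest)
      fix x assume "x \<in> K"
      then obtain a where "a \<in> T" "ereal a < F x" using T(3) by blast
      moreover have "Min T \<le> a" using T(2) \<open>a \<in> T\<close> by simp
      ultimately show "ereal (Min T) \<le> F x" by (meson ereal_less_eq(3) less_imp_le order_trans)
    qed
    moreover have "m < ereal (Min T)" using T(1,2) \<open>T \<noteq> {}\<close> Min_in by blast
    ultimately show False by simp
  qed
  then show thesis using that unfolding m_def by (meson INF_lower order_trans)
qed

section \<open>Subdifferentials\<close>

definition convex_subdiff :: "('a::real_inner \<Rightarrow> ereal) \<Rightarrow> 'a \<Rightarrow> 'a set" where
  "convex_subdiff g x = {v. \<bar>g x\<bar> \<noteq> \<infinity> \<and> (\<forall>z. g x + ereal (v \<bullet> (z - x)) \<le> g z)}"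

lemma ereal_add_real_cancel: "(a::ereal) + ereal c + ereal (- c) = a"
  by (cases a) auto

lemma ereal_diff_add_real: "(a::ereal) - ereal c + ereal c = a"
  by (cases a) auto

lemma convex_subdiff_subset_frechet_subdiff: "convex_subdiff g x \<subseteq> frechet_subdiff g x"
proof
  fix v assume "v \<in> convex_subdiff g x"
  then have fin: "\<bar>g x\<bar> \<noteq> \<infinity>" and glob: "\<And>z. g x + ereal (v \<bullet> (z - x)) \<le> g z"
    unfolding convex_subdiff_def by auto
  have "g x + ereal (v \<bullet> (y - x) - e * norm (y - x)) \<le> g y" if "e > 0" for e y
  proof -
    have "g x + ereal (v \<bullet> (y - x) - e * norm (y - x)) \<le> g x + ereal (v \<bullet> (y - x))"
      using that by (intro add_left_mono) simp
    also have "\<dots> \<le> g y" by (rule glob)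
    finally show ?thesis .
  qed
  then show "v \<in> frechet_subdiff g x"
    unfolding frechet_subdiff_def using fin by (auto intro: exI[of _ 1])
qed

lemma frechet_subdiff_local_min:
  assumes "\<bar>F x\<bar> \<noteq> \<infinity>" "\<rho> > 0" "\<And>y. norm (y - x) < \<rho> \<Longrightarrow> F x \<le> F y"
  shows "0 \<in> frechet_subdiff F x"
proof -
  obtain a where a: "F x = ereal a" using assms(1) by (cases "F x") auto
  have "F x + ereal (0 \<bullet> (y - x) - e * norm (y - x)) \<le> F y" if "e > 0" "norm (y - x) < \<rho>" for e y
  proof -
    have "F x + ereal (0 \<bullet> (y - x) - e * norm (y - x)) \<le> F x" using that(1) unfolding a by simp
    also have "\<dots> \<le> F y" using assms(3) that(2) .
    finally show ?thesis .
  qed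
  then show ?thesis unfolding frechet_subdiff_def using assms(1,2) by blast
qed

lemma frechet_subdiff_add_differentiable:
  fixes f :: "'a::euclidean_space \<Rightarrow> ereal"
  assumes der: "(\<psi> has_derivative (\<lambda>h. w \<bullet> h)) (at x)"
    and v: "v \<in> frechet_subdiff f x"
  shows "v + w \<in> frechet_subdiff (\<lambda>y. f y + ereal (\<psi> y)) x"
proof -
  from v have fin: "\<bar>f x\<bar> \<noteq> \<infinity>" and fr: "\<And>e. e > 0 \<Longrightarrow> \<exists>d>0. \<forall>y. norm (y - x) < d \<longrightarrow>
      f x + ereal (v \<bullet> (y - x) - e * norm (y - x)) \<le> f y"
    unfolding frechet_subdiff_def by auto
  have dd: "\<And>e. e > 0 \<Longrightarrow> \<exists>d>0. \<forall>y. norm (y - x) < d \<longrightarrow>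
      norm (\<psi> y - \<psi> x - w \<bullet> (y - x)) \<le> e * norm (y - x)"
    using der unfolding has_derivative_at_alt by blast
  have "\<exists>d>0. \<forall>y. norm (y - x) < d \<longrightarrow>
      f x + ereal (\<psi> x) + ereal ((v + w) \<bullet> (y - x) - e * norm (y - x)) \<le> f y + ereal (\<psi> y)"
    if e: "e > 0" for e
  proof -
    obtain d1 where d1: "d1 > 0" "\<And>y. norm (y - x) < d1 \<Longrightarrow>
        f x + ereal (v \<bullet> (y - x) - (e/2) * norm (y - x)) \<le> f y"
      using fr[of "e/2"] e by auto
    obtain d2 where d2: "d2 > 0" "\<And>y. norm (y - x) < d2 \<Longrightarrow>
        norm (\<psi> y - \<psi> x - w \<bullet> (y - x)) \<le> (e/2) * norm (y - x)"
      using dd[of "e/2"] e by auto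
    have "f x + ereal (\<psi> x) + ereal ((v + w) \<bullet> (y - x) - e * norm (y - x)) \<le> f y + ereal (\<psi> y)"
      if y: "norm (y - x) < min d1 d2" for y
    proof -
      have f_lo: "f x + ereal (v \<bullet> (y - x) - (e/2) * norm (y - x)) \<le> f y" using d1 y by simp
      have "norm (\<psi> y - \<psi> x - w \<bullet> (y - x)) \<le> (e/2) * norm (y - x)" using d2 y by simp
      then have psi_lo: "\<psi> x + w \<bullet> (y - x) - (e/2) * norm (y - x) \<le> \<psi> y"
        unfolding real_norm_def by arith
      obtain a where a: "f x = ereal a" using fin by (cases "f x") auto
      show ?thesis
      proof (cases "f y")
        case (real b)
        then show ?thesis using f_lo psi_lo unfolding a by (simp add: inner_add_left)
      qed (use f_lo a in auto)
    qed
    then show ?thesis using d1 d2 by (intro exI[of _ "min d1 d2"]) auto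
  qed
  then show ?thesis unfolding frechet_subdiff_def using fin by auto
qed

lemma frechet_subdiff_subset_limiting_subdiff: "frechet_subdiff f x \<subseteq> limiting_subdiff f x"
proof
  fix v assume fr: "v \<in> frechet_subdiff f x"
  then have "\<bar>f x\<bar> \<noteq> \<infinity>" unfolding frechet_subdiff_def by auto
  moreover have "\<exists>xs vs. xs \<longlonglongrightarrow> x \<and> (\<lambda>k. f (xs k)) \<longlonglongrightarrow> f x \<and> vs \<longlonglongrightarrow> v \<and>
      (\<forall>k. vs k \<in> frechet_subdiff f (xs k))"
    by (rule exI[of _ "\<lambda>_. x"], rule exI[of _ "\<lambda>_. v"]) (simp add: fr)
  ultimately show "v \<in> limiting_subdiff f x" unfolding limiting_subdiff_def by blast
qed

text \<open>On the segment from \<open>x\<close> to \<open>z\<close> the Frechet inequality bounds \<open>g\<close> from below with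
  slope \<open>v \<bullet> (z - x)\<close>, while convexity bounds it from above by the chord of slope \<open>b - a\<close>.\<close>

lemma ext_convex_frechet_subgradient_le:
  fixes g :: "'a::euclidean_space \<Rightarrow> ereal"
  assumes cv: "ext_convex g" and v: "v \<in> frechet_subdiff g x"
    and a: "g x = ereal a" and b: "g z \<le> ereal b"
  shows "a + v \<bullet> (z - x) \<le> b"
proof (rule ccontr)
  assume gt: "\<not> ?thesis"
  define \<eta> where "\<eta> = a + v \<bullet> (z - x) - b"
  have \<eta>: "\<eta> > 0" using gt unfolding \<eta>_def by simp
  have "z \<noteq> x" using gt a b by auto
  define n where "n = norm (z - x)"
  have n: "n > 0" using \<open>z \<noteq> x\<close> unfolding n_def by simp
  have "\<eta> / (2 * n) > 0" using \<eta> n by simp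
  then obtain d where d: "d > 0" "\<And>y. norm (y - x) < d \<Longrightarrow>
      g x + ereal (v \<bullet> (y - x) - (\<eta> / (2 * n)) * norm (y - x)) \<le> g y"
    using v unfolding frechet_subdiff_def by blast
  define t where "t = min (1/2) (d / (2 * n))"
  have t: "t > 0" "t < 1" "t * n < d" using n d unfolding t_def by (auto simp: min_def field_simps)
  define y where "y = t *\<^sub>R z + (1 - t) *\<^sub>R x"
  have yx: "y - x = t *\<^sub>R (z - x)" unfolding y_def by (simp add: algebra_simps)
  have ny: "norm (y - x) = t * n" unfolding yx n_def using t by simp
  have "t *\<^sub>R (z, b) + (1 - t) *\<^sub>R (x, a) \<in> {(x, \<mu>::real). g x \<le> ereal \<mu>}"
    using cv t a b unfolding ext_convex_def by (intro convexD) auto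
  then have up: "g y \<le> ereal (t * b + (1 - t) * a)" unfolding y_def by simp
  have lo: "g x + ereal (v \<bullet> (y - x) - (\<eta> / (2 * n)) * norm (y - x)) \<le> g y"
    by (rule d(2)) (simp add: ny t(3))
  have "a + t * (v \<bullet> (z - x)) - (\<eta> / (2 * n)) * (t * n) \<le> t * b + (1 - t) * a"
    using order_trans[OF lo up] unfolding a yx ny[unfolded yx] by simp
  moreover have "(\<eta> / (2 * n)) * (t * n) = t * (\<eta> / 2)" using n by (simp add: field_simps)
  moreover have "t * \<eta> = t * a + t * (v \<bullet> (z - x)) - t * b" "(1 - t) * a = a - t * a"
    unfolding \<eta>_def by (simp_all add: algebra_simps)
  ultimately have "t * \<eta> \<le> t * (\<eta> / 2)" by linarith
  then show False using t \<eta> by simp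
qed

lemma ext_convex_frechet_subdiff_eq:
  fixes g :: "'a::euclidean_space \<Rightarrow> ereal"
  assumes cv: "ext_convex g"
  shows "frechet_subdiff g x = convex_subdiff g x"
proof
  show "frechet_subdiff g x \<subseteq> convex_subdiff g x"
  proof
    fix v assume v: "v \<in> frechet_subdiff g x"
    then have "\<bar>g x\<bar> \<noteq> \<infinity>" unfolding frechet_subdiff_def by auto
    then obtain a where a: "g x = ereal a" by (cases "g x") auto
    have "g x + ereal (v \<bullet> (z - x)) \<le> g z" for z
    proof (cases "g z")
      case (real b)
      then show ?thesis using ext_convex_frechet_subgradient_le[OF cv v a] a by simp
    next
      case MInf
      then show ?thesis
        using ext_convex_frechet_subgradient_le[OF cv v a, of z "a + v \<bullet> (z - x) - 1"] by simp
    qed simp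
    then show "v \<in> convex_subdiff g x" unfolding convex_subdiff_def a by simp
  qed
qed (rule convex_subdiff_subset_frechet_subdiff)

lemma convex_subdiff_limit:
  fixes g :: "'a::euclidean_space \<Rightarrow> ereal"
  assumes xs: "xs \<longlonglongrightarrow> x" and ws: "ws \<longlonglongrightarrow> w"
    and gx: "\<bar>g x\<bar> \<noteq> \<infinity>" and gxs: "(\<lambda>k. g (xs k)) \<longlonglongrightarrow> g x"
    and sub: "\<And>k. ws k \<in> convex_subdiff g (xs k)"
  shows "w \<in> convex_subdiff g x"
proof -
  have "g x + ereal (w \<bullet> (z - x)) \<le> g z" for z
  proof (rule tendsto_le[OF trivial_limit_sequentially tendsto_const])
    have "(\<lambda>k. ereal (ws k \<bullet> (z - xs k))) \<longlonglongrightarrow> ereal (w \<bullet> (z - x))"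
      by (intro tendsto_intros ws xs)
    then show "(\<lambda>k. g (xs k) + ereal (ws k \<bullet> (z - xs k))) \<longlonglongrightarrow> g x + ereal (w \<bullet> (z - x))"
      by (intro tendsto_add_ereal[OF gx _ gxs]) auto
    show "\<forall>\<^sub>F k in sequentially. g (xs k) + ereal (ws k \<bullet> (z - xs k)) \<le> g z"
      using sub unfolding convex_subdiff_def by auto
  qed
  then show ?thesis unfolding convex_subdiff_def using gx by simp
qed

lemma limiting_subdiff_convex_add_smooth:
  fixes g :: "'a::euclidean_space \<Rightarrow> ereal" and \<psi> :: "'a \<Rightarrow> real"
  assumes cv: "ext_convex g" and der: "\<And>x. (\<psi> has_derivative (\<lambda>h. d\<psi> x \<bullet> h)) (at x)"
    and cont: "\<And>x. isCont d\<psi> x"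
  shows "limiting_subdiff (\<lambda>x. g x + ereal (\<psi> x)) x = (\<lambda>w. w + d\<psi> x) ` convex_subdiff g x"
proof -
  define f where "f = (\<lambda>x. g x + ereal (\<psi> x))"
  have g_eq: "g = (\<lambda>y. f y + ereal (- \<psi> y))"
    unfolding f_def by (simp add: ereal_add_real_cancel)
  have frechet_shift: "v - d\<psi> y \<in> convex_subdiff g y" if "v \<in> frechet_subdiff f y" for v y
  proof -
    have "((\<lambda>y. - \<psi> y) has_derivative (\<lambda>h. - d\<psi> y \<bullet> h)) (at y)"
      using has_derivative_minus[OF der] by simp
    from frechet_subdiff_add_differentiable[OF this that]
    show ?thesis using ext_convex_frechet_subdiff_eq[OF cv] g_eq by simp
  qed
  have "limiting_subdiff f x \<subseteq> (\<lambda>w. w + d\<psi> x) ` convex_subdiff g x"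
  proof
    fix v assume "v \<in> limiting_subdiff f x"
    then obtain xs vs where fx: "\<bar>f x\<bar> \<noteq> \<infinity>" and xs: "xs \<longlonglongrightarrow> x"
      and fxs: "(\<lambda>k. f (xs k)) \<longlonglongrightarrow> f x" and vs: "vs \<longlonglongrightarrow> v"
      and fr: "\<And>k. vs k \<in> frechet_subdiff f (xs k)"
      unfolding limiting_subdiff_def mem_Collect_eq by metis
    have "(\<lambda>k. \<psi> (xs k)) \<longlonglongrightarrow> \<psi> x" "(\<lambda>k. d\<psi> (xs k)) \<longlonglongrightarrow> d\<psi> x"
      using has_derivative_continuous[OF der] cont by (auto intro: isCont_tendsto_compose[OF _ xs])
    then have ws: "(\<lambda>k. vs k - d\<psi> (xs k)) \<longlonglongrightarrow> v - d\<psi> x"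
      and gxs: "(\<lambda>k. g (xs k)) \<longlonglongrightarrow> g x"
      by (auto simp: g_eq intro!: tendsto_intros tendsto_add_ereal[OF fx _ fxs] vs)
    have "\<bar>g x\<bar> \<noteq> \<infinity>" using fx unfolding g_eq by (cases "f x") auto
    from convex_subdiff_limit[OF xs ws this gxs frechet_shift[OF fr]]
    have "v - d\<psi> x \<in> convex_subdiff g x" .
    then show "v \<in> (\<lambda>w. w + d\<psi> x) ` convex_subdiff g x" by force
  qed
  moreover have "(\<lambda>w. w + d\<psi> x) ` convex_subdiff g x \<subseteq> limiting_subdiff f x"
    using convex_subdiff_subset_frechet_subdiff frechet_subdiff_subset_limiting_subdiff
      frechet_subdiff_add_differentiable[OF der] unfolding f_def by blast
  ultimately show ?thesis unfolding f_def by blast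
qed

section \<open>Gradients of convex functions\<close>

lemma convex_on_gradient_ineq:
  fixes phi :: "'a::euclidean_space \<Rightarrow> real"
  assumes cv: "convex_on UNIV phi" and der: "(phi has_derivative (\<lambda>h. d \<bullet> h)) (at x)"
  shows "phi x + d \<bullet> (z - x) \<le> phi z"
proof -
  have "ext_convex (\<lambda>y. 0 + ereal (phi y))"
    using convex_epigraphI[OF cv] unfolding ext_convex_def epigraph_def by (simp add: split_def)
  moreover have "(0::'a) \<in> frechet_subdiff (\<lambda>_. 0) x"
    using convex_subdiff_subset_frechet_subdiff unfolding convex_subdiff_def by fastforce
  then have "0 + d \<in> frechet_subdiff (\<lambda>y. 0 + ereal (phi y)) x"
    by (rule frechet_subdiff_add_differentiable[OF der])
  ultimately show ?thesis
    using ext_convex_frechet_subdiff_eq unfolding convex_subdiff_def by fastforce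
qed

text \<open>For fixed \<open>t > 0\<close>, \<open>t (\<nabla>\<phi>(y) \<bullet> u) \<le> \<phi>(y + t u) - \<phi>(y)\<close>, and the right-hand side
  tends to \<open>\<phi>(x + t u) - \<phi>(x) \<approx> t (\<nabla>\<phi>(x) \<bullet> u)\<close> as \<open>y \<rightarrow> x\<close>.\<close>

lemma eventually_gradient_inner_le:
  fixes phi :: "'a::euclidean_space \<Rightarrow> real"
  assumes cv: "convex_on UNIV phi" and der: "\<And>x. (phi has_derivative (\<lambda>h. gphi x \<bullet> h)) (at x)"
    and u: "norm u = 1" and e: "e > 0"
  shows "\<forall>\<^sub>F y in at x. gphi y \<bullet> u \<le> gphi x \<bullet> u + e"
proof -
  have cont: "isCont phi y" for y by (rule has_derivative_continuous[OF der])
  obtain d where d: "d > 0" "\<And>y. norm (y - x) < d \<Longrightarrow>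
      norm (phi y - phi x - gphi x \<bullet> (y - x)) \<le> (e/3) * norm (y - x)"
    using der[of x, unfolded has_derivative_at_alt] e by (metis divide_pos_pos zero_less_numeral)
  define t where "t = d / 2"
  have t: "t > 0" "t < d" using d unfolding t_def by auto
  have "norm (phi (x + t *\<^sub>R u) - phi x - gphi x \<bullet> ((x + t *\<^sub>R u) - x)) \<le> (e/3) * t"
    using d(2)[of "x + t *\<^sub>R u"] u t by simp
  then have "phi (x + t *\<^sub>R u) - phi x - t * (gphi x \<bullet> u) \<le> (e/3) * t"
    by (simp only: real_norm_def add_diff_cancel_left' inner_scaleR_right abs_le_iff)
  then have step_x: "phi (x + t *\<^sub>R u) - phi x \<le> t * (gphi x \<bullet> u) + t * (e/3)"
    by (simp add: algebra_simps)
  have te: "t * (e/3) > 0" using t e by simp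
  have "((\<lambda>y. phi (y + t *\<^sub>R u)) \<longlongrightarrow> phi (x + t *\<^sub>R u)) (at x)"
    by (intro isCont_tendsto_compose[OF cont] tendsto_intros)
  from tendstoD[OF this te]
  have "\<forall>\<^sub>F y in at x. dist (phi (y + t *\<^sub>R u)) (phi (x + t *\<^sub>R u)) < t * (e/3)" .
  moreover have "\<forall>\<^sub>F y in at x. dist (phi y) (phi x) < t * (e/3)"
    using tendstoD[OF cont[unfolded isCont_def] te] .
  ultimately show ?thesis
  proof eventually_elim
    case (elim y)
    have "t * (gphi y \<bullet> u) \<le> phi (y + t *\<^sub>R u) - phi y"
      using convex_on_gradient_ineq[OF cv der, of y "y + t *\<^sub>R u"] by simp
    also have "\<dots> \<le> phi (x + t *\<^sub>R u) - phi x + 2 * (t * (e/3))"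
      using elim unfolding dist_real_def by linarith
    also have "\<dots> \<le> t * (gphi x \<bullet> u + e)" using step_x by (simp add: algebra_simps)
    finally show ?case using t by simp
  qed
qed

lemma convex_gradient_isCont:
  fixes phi :: "'a::euclidean_space \<Rightarrow> real"
  assumes cv: "convex_on UNIV phi" and der: "\<And>x. (phi has_derivative (\<lambda>h. gphi x \<bullet> h)) (at x)"
  shows "isCont gphi x"
  unfolding isCont_def
proof (rule tendsto_componentwise_iff[THEN iffD2], intro ballI tendstoI)
  fix b :: 'a and e :: real assume b: "b \<in> Basis" and e: "e > 0"
  have "norm b = 1" "norm (- b) = 1" using b by auto
  then have "\<forall>\<^sub>F y in at x. gphi y \<bullet> b \<le> gphi x \<bullet> b + e/2"
    "\<forall>\<^sub>F y in at x. gphi y \<bullet> - b \<le> gphi x \<bullet> - b + e/2"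
    using eventually_gradient_inner_le[OF cv der _ half_gt_zero[OF e]] by blast+
  then show "\<forall>\<^sub>F y in at x. dist (gphi y \<bullet> b) (gphi x \<bullet> b) < e"
    by eventually_elim (use e in \<open>auto simp: dist_real_def abs_less_iff\<close>)
qed

section \<open>Suprema of affine minorants\<close>

definition is_sup_of_minorants :: "('i \<Rightarrow> 'a \<Rightarrow> ereal) \<Rightarrow> ('a \<Rightarrow> ereal) \<Rightarrow> bool" where
  "is_sup_of_minorants h f \<longleftrightarrow> (\<forall>x. f x = (SUP i\<in>{i. \<forall>z. h i z \<le> f z}. h i x))"

lemma is_sup_of_minorants_iff_le:
  "is_sup_of_minorants h f \<longleftrightarrow> (\<forall>x. f x \<le> (SUP i\<in>{i. \<forall>z. h i z \<le> f z}. h i x))"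
proof -
  have "(SUP i\<in>{i. \<forall>z. h i z \<le> f z}. h i x) \<le> f x" for x by (rule SUP_least) simp
  then have "f x = (SUP i\<in>{i. \<forall>z. h i z \<le> f z}. h i x) \<longleftrightarrow> f x \<le> (SUP i\<in>{i. \<forall>z. h i z \<le> f z}. h i x)" for x
    by (simp add: order.eq_iff)
  then show ?thesis unfolding is_sup_of_minorants_def by simp
qed

lemma SUP_minorants_eq_SUP_range:
  "(SUP i\<in>{i. \<forall>z. h i z \<le> f z}. h i x) = (SUP k\<in>{k\<in>range h. k \<le> f}. k x)"
proof -
  have "{k\<in>range h. k \<le> f} = h ` {i. \<forall>z. h i z \<le> f z}" by (auto simp: le_fun_def)
  then show ?thesis by (simp add: image_image)
qed

lemma is_sup_of_minorants_cong_range: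
  "range h = range h' \<Longrightarrow> is_sup_of_minorants h f \<longleftrightarrow> is_sup_of_minorants h' f"
  unfolding is_sup_of_minorants_def SUP_minorants_eq_SUP_range by simp

definition affine_fun :: "'a::real_inner \<times> ereal \<Rightarrow> 'a \<Rightarrow> ereal" where
  "affine_fun p x = ereal (fst p \<bullet> x) + snd p"

lemma is_sup_of_minorants_shift:
  fixes c :: "'a::real_inner \<Rightarrow> real"
  shows "is_sup_of_minorants (\<lambda>p x. ereal (c x + fst p \<bullet> x) + snd p) f
     \<longleftrightarrow> is_sup_of_minorants affine_fun (\<lambda>x. f x - ereal (c x))"
proof -
  have shift_le: "ereal (c z + fst p \<bullet> z) + snd p \<le> f z \<longleftrightarrow> affine_fun p z \<le> f z - ereal (c z)" for p z
    unfolding affine_fun_def by (cases "snd p"; cases "f z") (simp_all add: le_diff_eq ac_simps)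
  have shift_eq: "ereal (c x + fst p \<bullet> x) + snd p = affine_fun p x + ereal (c x)" for p x
    unfolding affine_fun_def by (cases "snd p") simp_all
  define A where "A = {p. \<forall>z. affine_fun p z \<le> f z - ereal (c z)}"
  have "(0, -\<infinity>) \<in> A" unfolding A_def affine_fun_def by simp
  then have "(SUP p\<in>A. ereal (c x + fst p \<bullet> x) + snd p) = (SUP p\<in>A. affine_fun p x) + ereal (c x)" for x
    unfolding shift_eq by (intro SUP_ereal_add_left) auto
  moreover have "f x = y + ereal (c x) \<longleftrightarrow> f x - ereal (c x) = y" for x y
    by (cases "f x"; cases y) auto
  ultimately show ?thesis
    unfolding is_sup_of_minorants_def shift_le A_def[symmetric] by simp
qed

lemma lsc_fun_SUP_affine_fun: "lsc_fun (\<lambda>x. SUP p\<in>S. affine_fun p x)"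
proof (rule lsc_fun_SUP)
  fix p :: "'a \<times> ereal"
  have "lsc_fun (\<lambda>_::'a. snd p)" unfolding lsc_fun_iff_nhds by simp
  then have "lsc_fun (\<lambda>x. snd p + ereal (fst p \<bullet> x))"
    by (rule lsc_fun_add_continuous) (intro continuous_intros)
  then show "lsc_fun (affine_fun p)" unfolding affine_fun_def by (simp add: add.commute)
qed

lemma ext_convex_SUP_affine_fun: "ext_convex (\<lambda>x. SUP p\<in>S. affine_fun p x)"
  unfolding ext_convex_def
proof (rule convexI, clarsimp)
  fix x y :: 'a and \<mu> \<nu> u w :: real
  assume x: "(SUP p\<in>S. affine_fun p x) \<le> ereal \<mu>" and y: "(SUP p\<in>S. affine_fun p y) \<le> ereal \<nu>"
    and u: "0 \<le> u" and w: "0 \<le> w" and uw: "u + w = 1"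
  show "(SUP p\<in>S. affine_fun p (u *\<^sub>R x + w *\<^sub>R y)) \<le> ereal (u * \<mu> + w * \<nu>)"
  proof (rule SUP_least)
    fix p assume "p \<in> S"
    then have px: "affine_fun p x \<le> ereal \<mu>" and py: "affine_fun p y \<le> ereal \<nu>"
      using x y by (meson SUP_upper order_trans)+
    show "affine_fun p (u *\<^sub>R x + w *\<^sub>R y) \<le> ereal (u * \<mu> + w * \<nu>)"
    proof (cases "snd p")
      case (real \<delta>)
      then have "fst p \<bullet> x + \<delta> \<le> \<mu>" "fst p \<bullet> y + \<delta> \<le> \<nu>"
        using px py unfolding affine_fun_def by simp_all
      then have "u * (fst p \<bullet> x + \<delta>) + w * (fst p \<bullet> y + \<delta>) \<le> u * \<mu> + w * \<nu>"
        using u w by (intro add_mono mult_left_mono)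
      moreover have "u * \<delta> + w * \<delta> = \<delta>" using uw by (simp add: distrib_right[symmetric])
      ultimately have "fst p \<bullet> (u *\<^sub>R x + w *\<^sub>R y) + \<delta> \<le> u * \<mu> + w * \<nu>"
        by (simp add: inner_add_right distrib_left)
      then show ?thesis using real unfolding affine_fun_def by simp
    qed (use px in \<open>simp_all add: affine_fun_def\<close>)
  qed
qed

lemma has_derivative_neg_sqdist:
  fixes c :: "'a::real_inner"
  shows "((\<lambda>z. - (k * (norm (z - c))\<^sup>2)) has_derivative (\<lambda>h. ((2 * k) *\<^sub>R (c - y)) \<bullet> h)) (at y)"
  unfolding power2_norm_eq_inner
  by (auto intro!: derivative_eq_intros ext simp: inner_commute inner_diff_left inner_diff_right algebra_simps)

lemma frechet_subdiff_penalized_local_min: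
  fixes g :: "'a::euclidean_space \<Rightarrow> ereal"
  assumes fin: "\<bar>g y\<bar> \<noteq> \<infinity>" and \<rho>: "\<rho> > 0"
    and min: "\<And>z. norm (z - y) < \<rho> \<Longrightarrow>
      g y + ereal (k * (norm (y - x0))\<^sup>2) \<le> g z + ereal (k * (norm (z - x0))\<^sup>2)"
  shows "(2 * k) *\<^sub>R (x0 - y) \<in> frechet_subdiff g y"
proof -
  define F where "F = (\<lambda>z. g z + ereal (k * (norm (z - x0))\<^sup>2))"
  have "0 \<in> frechet_subdiff F y"
    using fin \<rho> min unfolding F_def by (intro frechet_subdiff_local_min) (cases "g y"; auto)+
  from frechet_subdiff_add_differentiable[OF has_derivative_neg_sqdist[where k=k and c=x0] this]
  show ?thesis unfolding F_def by (simp add: ereal_add_real_cancel)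
qed

lemma frechet_subgradient_at_penalized_min:
  fixes g :: "'a::euclidean_space \<Rightarrow> ereal"
  assumes lsc: "lsc_fun g" and nm: "\<And>x. g x \<noteq> -\<infinity>" and gp: "g p = ereal gp"
    and lower: "\<And>y. y \<in> cball x0 (norm (p - x0) + 1) \<Longrightarrow> ereal m \<le> g y"
    and k: "k \<ge> 1" "k \<ge> gp - m + 1"
  obtains y gy where "g y = ereal gy" "m \<le> gy" "(2 * k) *\<^sub>R (x0 - y) \<in> frechet_subdiff g y"
proof -
  define R where "R = norm (p - x0) + 1"
  define K where "K = cball x0 R"
  have K: "compact K" "p \<in> K" unfolding K_def R_def by (auto simp: dist_norm norm_minus_commute)
  define F where "F = (\<lambda>y. g y + ereal (k * (norm (y - x0))\<^sup>2))"
  have "lsc_fun F" unfolding F_def by (intro lsc_fun_add_continuous[OF lsc] continuous_intros)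
  then obtain y where "y \<in> K" and y_min: "\<And>z. z \<in> K \<Longrightarrow> F y \<le> F z"
    using lsc_fun_attains_min[OF _ K(1)] K(2) by blast
  have "F y \<le> ereal (gp + k * (norm (p - x0))\<^sup>2)" using y_min[OF K(2)] unfolding F_def gp by simp
  then obtain gy where gy: "g y = ereal gy"
    and Fy: "gy + k * (norm (y - x0))\<^sup>2 \<le> gp + k * (norm (p - x0))\<^sup>2"
    using nm[of y] unfolding F_def by (cases "g y") auto
  have "m \<le> gy" using lower \<open>y \<in> K\<close> gy unfolding K_def R_def by fastforce
  have interior: "norm (y - x0) < R"
  proof (rule ccontr)
    assume "\<not> norm (y - x0) < R"
    then have "norm (y - x0) = R" using \<open>y \<in> K\<close> unfolding K_def by (simp add: dist_norm norm_minus_commute)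
    then have "m + k * R\<^sup>2 \<le> gp + k * (R - 1)\<^sup>2" using Fy \<open>m \<le> gy\<close> unfolding R_def by simp
    then have "k * (2 * R - 1) \<le> gp - m" by (simp add: power2_eq_square algebra_simps)
    moreover have "k \<le> k * (2 * R - 1)" using k(1) unfolding R_def by simp
    ultimately show False using k(2) by simp
  qed
  have "(2 * k) *\<^sub>R (x0 - y) \<in> frechet_subdiff g y"
  proof (rule frechet_subdiff_penalized_local_min)
    show "\<bar>g y\<bar> \<noteq> \<infinity>" "R - norm (y - x0) > 0" using gy interior by auto
    fix z assume "norm (z - y) < R - norm (y - x0)"
    then have "z \<in> K"
      using norm_triangle_ineq[of "z - y" "y - x0"] unfolding K_def by (simp add: dist_norm norm_minus_commute)
    then show "g y + ereal (k * (norm (y - x0))\<^sup>2) \<le> g z + ereal (k * (norm (z - x0))\<^sup>2)"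
      using y_min unfolding F_def by blast
  qed
  then show thesis using that gy \<open>m \<le> gy\<close> by blast
qed

text \<open>The minimiser \<open>y\<close> of \<open>g + k \<parallel>\<cdot> - x\<^sub>0\<parallel>\<^sup>2\<close> on a ball is interior once \<open>k\<close> is large, and
  then either \<open>y\<close> is close to \<open>x\<^sub>0\<close>, where \<open>g > M\<close> by lower semicontinuity, or the penalty
  \<open>2k \<parallel>y - x\<^sub>0\<parallel>\<^sup>2\<close> exceeds \<open>M - min g\<close>.\<close>

lemma exists_frechet_subgradient_above:
  fixes g :: "'a::euclidean_space \<Rightarrow> ereal"
  assumes lsc: "lsc_fun g" and nm: "\<And>x. g x \<noteq> -\<infinity>" and p: "g p \<noteq> \<infinity>"
    and M: "ereal M < g x0"
  obtains y v where "v \<in> frechet_subdiff g y" "ereal M \<le> g y + ereal (v \<bullet> (x0 - y))"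
proof -
  obtain gp where gp: "g p = ereal gp" using p nm[of p] by (cases "g p") auto
  define K where "K = cball x0 (norm (p - x0) + 1)"
  have K: "compact K" "p \<in> K" unfolding K_def by (auto simp: dist_norm norm_minus_commute)
  obtain xm where "xm \<in> K" and xm_min: "\<And>y. y \<in> K \<Longrightarrow> g xm \<le> g y"
    using lsc_fun_attains_min[OF lsc K(1)] K(2) by blast
  then obtain m where m: "g xm = ereal m" using xm_min[OF K(2)] gp nm[of xm] by (cases "g xm") auto
  obtain d where d: "d > 0" "\<And>y. dist y x0 < d \<Longrightarrow> ereal M < g y"
    using lsc M unfolding lsc_fun_iff_nhds eventually_nhds_metric by blast
  define k where "k = max 1 (max (gp - m + 1) ((M - m) / d\<^sup>2))"
  have k: "k \<ge> 1" "k \<ge> gp - m + 1" unfolding k_def by auto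
  have "(M - m) / d\<^sup>2 * d\<^sup>2 \<le> k * d\<^sup>2" unfolding k_def by (intro mult_right_mono) auto
  then have k_d: "M - m \<le> k * d\<^sup>2" using d(1) by simp
  obtain y gy where gy: "g y = ereal gy" and "m \<le> gy"
    and fr: "(2 * k) *\<^sub>R (x0 - y) \<in> frechet_subdiff g y"
    using frechet_subgradient_at_penalized_min[OF lsc nm gp _ k] xm_min m unfolding K_def by metis
  have above: "M \<le> gy + 2 * k * (norm (y - x0))\<^sup>2"
  proof (cases "norm (y - x0) < d")
    case True
    then have "M < gy" using d(2)[of y] gy by (simp add: dist_norm)
    moreover have "0 \<le> 2 * k * (norm (y - x0))\<^sup>2" using k(1) by simp
    ultimately show ?thesis by linarith
  next
    case False
    then have "k * d\<^sup>2 \<le> k * (norm (y - x0))\<^sup>2"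
      using d(1) k(1) by (intro mult_left_mono power_mono) auto
    moreover have "0 \<le> k * (norm (y - x0))\<^sup>2" using k(1) by simp
    ultimately show ?thesis using k_d \<open>m \<le> gy\<close> by linarith
  qed
  have slope: "((2 * k) *\<^sub>R (x0 - y)) \<bullet> (x0 - y) = 2 * k * (norm (y - x0))\<^sup>2"
    by (simp add: dot_square_norm norm_minus_commute)
  have "ereal M \<le> g y + ereal (((2 * k) *\<^sub>R (x0 - y)) \<bullet> (x0 - y))"
    unfolding gy slope using above by simp
  then show thesis by (rule that[OF fr])
qed

lemma is_sup_of_affine_minorants_if_frechet_subdiff_convex:
  fixes g :: "'a::euclidean_space \<Rightarrow> ereal"
  assumes lsc: "lsc_fun g" and nm: "\<And>x. g x \<noteq> -\<infinity>" and p: "g p \<noteq> \<infinity>"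
    and sub: "\<And>x. frechet_subdiff g x \<subseteq> convex_subdiff g x"
  shows "is_sup_of_minorants affine_fun g"
  unfolding is_sup_of_minorants_iff_le
proof (intro allI, rule dense_le)
  fix x0 and z :: ereal assume "z < g x0"
  then obtain M where M: "z < ereal M" "ereal M < g x0" using ereal_dense2 by blast
  obtain y v where fr: "v \<in> frechet_subdiff g y" and above: "ereal M \<le> g y + ereal (v \<bullet> (x0 - y))"
    using exists_frechet_subgradient_above[OF lsc nm p M(2)] .
  have "v \<in> convex_subdiff g y" using sub[of y] fr by blast
  then have fin: "\<bar>g y\<bar> \<noteq> \<infinity>" and supp: "\<And>x. g y + ereal (v \<bullet> (x - y)) \<le> g x"
    unfolding convex_subdiff_def by simp_all
  then obtain b where b: "g y = ereal b" by (cases "g y") auto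
  have "affine_fun (v, ereal (b - v \<bullet> y)) x = g y + ereal (v \<bullet> (x - y))" for x
    unfolding affine_fun_def b by (simp add: inner_diff_right)
  then have "(v, ereal (b - v \<bullet> y)) \<in> {p. \<forall>x. affine_fun p x \<le> g x}"
    and "affine_fun (v, ereal (b - v \<bullet> y)) x0 \<ge> ereal M"
    using supp above by simp_all
  then have "ereal M \<le> (SUP p\<in>{p. \<forall>x. affine_fun p x \<le> g x}. affine_fun p x0)"
    by (rule SUP_upper2)
  then show "z \<le> (SUP p\<in>{p. \<forall>x. affine_fun p x \<le> g x}. affine_fun p x0)"
    by (rule order.trans[OF less_imp_le[OF M(1)]])
qed

section \<open>Left Phi-convexity and coupling conjugates\<close>

lemma left_Phi_convex_iff_sup_of_minorants:
  "left_Phi_convex c f \<longleftrightarrow> is_sup_of_minorants (\<lambda>p x. ereal (c x (fst p)) - snd p) f"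
proof
  assume "left_Phi_convex c f"
  then obtain S where S: "\<And>x. f x = (SUP p\<in>S. ereal (c x (fst p)) - snd p)"
    unfolding left_Phi_convex_def by blast
  then have "S \<subseteq> {p. \<forall>z. ereal (c z (fst p)) - snd p \<le> f z}" by (auto intro: SUP_upper)
  then show "is_sup_of_minorants (\<lambda>p x. ereal (c x (fst p)) - snd p) f"
    unfolding is_sup_of_minorants_iff_le S by (auto intro: SUP_subset_mono)
next
  assume "is_sup_of_minorants (\<lambda>p x. ereal (c x (fst p)) - snd p) f"
  then show "left_Phi_convex c f" unfolding is_sup_of_minorants_def left_Phi_convex_def by blast
qed

definition left_conj :: "('a \<Rightarrow> 'b \<Rightarrow> real) \<Rightarrow> ('b \<Rightarrow> ereal) \<Rightarrow> 'a \<Rightarrow> ereal" where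
  "left_conj c g x = (SUP y. ereal (c x y) - g y)"

definition right_conj :: "('a \<Rightarrow> 'b \<Rightarrow> real) \<Rightarrow> ('a \<Rightarrow> ereal) \<Rightarrow> 'b \<Rightarrow> ereal" where
  "right_conj c f y = (SUP x. ereal (c x y) - f x)"

lemma ereal_diff_le_commute: "ereal a - b \<le> d \<longleftrightarrow> ereal a - d \<le> b"
  by (cases b; cases d) auto

lemma left_Phi_convex_left_conj: "left_Phi_convex c (left_conj c g)"
  unfolding left_Phi_convex_def left_conj_def
  by (intro exI[of _ "range (\<lambda>y. (y, g y))"]) (simp add: image_image)

lemma left_conj_right_conj_le: "left_conj c (right_conj c f) x \<le> f x"
  unfolding left_conj_def
proof (rule SUP_least)
  fix y
  have "ereal (c x y) - f x \<le> right_conj c f y" unfolding right_conj_def by (rule SUP_upper) simp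
  then show "ereal (c x y) - right_conj c f y \<le> f x" by (simp add: ereal_diff_le_commute)
qed

lemma left_Phi_convex_iff_eq_left_conj_right_conj:
  "left_Phi_convex c f \<longleftrightarrow> f = left_conj c (right_conj c f)"
proof
  assume "left_Phi_convex c f"
  then have minor: "is_sup_of_minorants (\<lambda>p x. ereal (c x (fst p)) - snd p) f"
    by (simp add: left_Phi_convex_iff_sup_of_minorants)
  have "f x \<le> left_conj c (right_conj c f) x" for x
  proof (rule order_trans[OF minor[unfolded is_sup_of_minorants_iff_le, rule_format]], rule SUP_least)
    fix p assume "p \<in> {p. \<forall>z. ereal (c z (fst p)) - snd p \<le> f z}"
    then have "right_conj c f (fst p) \<le> snd p"
      unfolding right_conj_def by (intro SUP_least) (simp add: ereal_diff_le_commute)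
    then have "ereal (c x (fst p)) - snd p \<le> ereal (c x (fst p)) - right_conj c f (fst p)"
      by (intro ereal_minus_mono) simp_all
    also have "\<dots> \<le> left_conj c (right_conj c f) x" unfolding left_conj_def by (rule SUP_upper) simp
    finally show "ereal (c x (fst p)) - snd p \<le> left_conj c (right_conj c f) x" .
  qed
  then show "f = left_conj c (right_conj c f)"
    by (intro ext antisym) (simp_all add: left_conj_right_conj_le)
next
  assume eq: "f = left_conj c (right_conj c f)"
  show "left_Phi_convex c f" by (subst eq) (rule left_Phi_convex_left_conj)
qed

lemma left_Phi_convex_iff_ex_left_conj: "left_Phi_convex c f \<longleftrightarrow> (\<exists>g. f = left_conj c g)"
proof
  assume "\<exists>g. f = left_conj c g"
  then obtain g where "f = left_conj c g" by blast
  then show "left_Phi_convex c f" by (simp add: left_Phi_convex_left_conj)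
qed (auto simp: left_Phi_convex_iff_eq_left_conj_right_conj)

section \<open>Bregman couplings\<close>

lemma uminus_INF_add_ereal: "- (INF y. g y + ereal (d y)) = (SUP y. ereal (- d y) - g y)"
proof -
  have "- (g y + ereal (d y)) = ereal (- d y) - g y" for y by (cases "g y") auto
  then show ?thesis by (simp flip: ereal_SUP_uminus_eq)
qed

lemma uminus_fenv_eq_right_conj:
  "(\<lambda>y. - fenv phi gphi f y) = right_conj (\<lambda>x y. - bregman phi gphi x y) f"
  unfolding fenv_def right_conj_def uminus_INF_add_ereal ..

lemma uminus_benv_eq_left_conj:
  "(\<lambda>x. - benv phi gphi g x) = left_conj (\<lambda>x y. - bregman phi gphi x y) g"
  unfolding benv_def left_conj_def uminus_INF_add_ereal ..

lemma bklee_eq_left_conj: "bklee phi gphi = left_conj (bregman phi gphi)"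
  unfolding bklee_def left_conj_def ..

lemma fklee_eq_right_conj: "fklee phi gphi = right_conj (bregman phi gphi)"
  unfolding fklee_def right_conj_def ..

lemma bregman_biconj_iff_left_conj_right_conj:
  assumes "r = -1 \<or> r = 1"
  shows "(if r = -1 then f = (\<lambda>x. - benv phi gphi (\<lambda>y. - fenv phi gphi f y) x)
          else f = bklee phi gphi (fklee phi gphi f))
      \<longleftrightarrow> f = left_conj (\<lambda>x y. r * bregman phi gphi x y) (right_conj (\<lambda>x y. r * bregman phi gphi x y) f)"
  using assms unfolding uminus_fenv_eq_right_conj uminus_benv_eq_left_conj
    bklee_eq_left_conj fklee_eq_right_conj by (elim disjE) simp_all

lemma bregman_envelope_iff_left_conj:
  assumes "r = -1 \<or> r = 1"
  shows "(\<exists>g. if r = -1 then f = (\<lambda>x. - benv phi gphi g x) else f = bklee phi gphi g)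
      \<longleftrightarrow> (\<exists>g. f = left_conj (\<lambda>x y. r * bregman phi gphi x y) g)"
  using assms unfolding uminus_benv_eq_left_conj bklee_eq_left_conj by (elim disjE) simp_all

lemma bregman_as_shifted_affine:
  "r * bregman phi gphi x y = r * phi x + (- r *\<^sub>R gphi y) \<bullet> x + r * (gphi y \<bullet> y - phi y)"
  by (simp add: bregman_def inner_diff_right algebra_simps)

lemma range_bregman_minorants:
  assumes bij: "bij gphi" and r: "r = -1 \<or> r = 1"
  shows "range (\<lambda>p x. ereal (r * bregman phi gphi x (fst p)) - snd p)
       = range (\<lambda>p x. ereal (r * phi x + fst p \<bullet> x) + snd p)"
    (is "range ?h\<Phi> = range ?hV")
proof -
  define \<kappa> where "\<kappa> y = r * (gphi y \<bullet> y - phi y)" for y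
  have \<Phi>_V: "?h\<Phi> p = ?hV (- r *\<^sub>R gphi (fst p), ereal (\<kappa> (fst p)) - snd p)" for p
    unfolding bregman_as_shifted_affine \<kappa>_def by (rule ext, cases "snd p") auto
  have V_\<Phi>: "?hV q = ?h\<Phi> (inv gphi (- r *\<^sub>R fst q), ereal (\<kappa> (inv gphi (- r *\<^sub>R fst q))) - snd q)" for q
  proof -
    have "- r *\<^sub>R gphi (inv gphi (- r *\<^sub>R fst q)) = fst q"
      using r surj_f_inv_f[OF bij_is_surj[OF bij]] by auto
    then show ?thesis unfolding \<Phi>_V by (cases "snd q") auto
  qed
  show ?thesis
  proof (intro equalityI subsetI)
    fix k assume "k \<in> range ?h\<Phi>"
    then obtain p where "k = ?h\<Phi> p" by blast
    then show "k \<in> range ?hV" unfolding \<Phi>_V by (rule image_eqI) simp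
  next
    fix k assume "k \<in> range ?hV"
    then obtain q where "k = ?hV q" by blast
    then show "k \<in> range ?h\<Phi>" unfolding V_\<Phi> by (rule image_eqI) simp
  qed
qed

lemma Phi_subdiff_bregman:
  fixes f :: "'a::euclidean_space \<Rightarrow> ereal"
  assumes "f x \<noteq> -\<infinity>"
  shows "Phi_subdiff (\<lambda>x y. r * bregman phi gphi x y) f x
       = {y. - r *\<^sub>R gphi y \<in> convex_subdiff (\<lambda>z. f z - ereal (r * phi z)) x}"
proof (cases "f x")
  case (real a)
  have "ereal a + ereal (r * bregman phi gphi z y - r * bregman phi gphi x y) \<le> f z
      \<longleftrightarrow> ereal a - ereal (r * phi x) + ereal ((- r *\<^sub>R gphi y) \<bullet> (z - x)) \<le> f z - ereal (r * phi z)"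
    for z y by (cases "f z") (auto simp: bregman_def inner_diff_right algebra_simps)
  then show ?thesis
    unfolding Phi_subdiff_def convex_subdiff_def mem_Collect_eq real by simp
qed (use assms in \<open>simp_all add: Phi_subdiff_def convex_subdiff_def\<close>)

lemma legendre_full_continuous:
  assumes "legendre_full phi gphi"
  shows "continuous_on UNIV phi"
  using assms unfolding legendre_full_def
  by (intro continuous_at_imp_continuous_on ballI has_derivative_continuous) blast

lemma legendre_full_gradient_isCont:
  assumes "legendre_full phi gphi"
  shows "isCont gphi x"
  using assms unfolding legendre_full_def by (blast intro: convex_gradient_isCont)

lemma limiting_subdiff_bregman:
  fixes f :: "'a::euclidean_space \<Rightarrow> ereal"
  assumes leg: "legendre_full phi gphi" and cv: "ext_convex (\<lambda>z. f z - ereal (r * phi z))"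
  shows "limiting_subdiff f x = (\<lambda>w. w + r *\<^sub>R gphi x) ` convex_subdiff (\<lambda>z. f z - ereal (r * phi z)) x"
proof -
  have der: "((\<lambda>y. r * phi y) has_derivative (\<lambda>h. (r *\<^sub>R gphi y) \<bullet> h)) (at y)" for y
    using has_derivative_mult_right[of phi _ _ r] leg unfolding legendre_full_def
    by (simp add: inner_scaleR_left)
  have cont: "isCont (\<lambda>y. r *\<^sub>R gphi y) y" for y
    using legendre_full_gradient_isCont[OF leg] by (intro continuous_intros)
  have "limiting_subdiff (\<lambda>z. f z - ereal (r * phi z) + ereal (r * phi z)) x
      = (\<lambda>w. w + r *\<^sub>R gphi x) ` convex_subdiff (\<lambda>z. f z - ereal (r * phi z)) x"
    by (rule limiting_subdiff_convex_add_smooth[OF cv der cont])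
  then show ?thesis by (simp add: ereal_diff_add_real)
qed

lemma Phi_subdiff_bregman_eq_limiting:
  fixes f :: "'a::euclidean_space \<Rightarrow> ereal"
  assumes leg: "legendre_full phi gphi" and r: "r = -1 \<or> r = 1" and fx: "f x \<noteq> -\<infinity>"
    and cv: "ext_convex (\<lambda>z. f z - ereal (r * phi z))"
  shows "Phi_subdiff (\<lambda>x y. r * bregman phi gphi x y) f x
       = inv gphi ` {gphi x - r *\<^sub>R v | v. v \<in> limiting_subdiff f x}"
proof -
  define C where "C = convex_subdiff (\<lambda>z. f z - ereal (r * phi z)) x"
  have bij: "bij gphi" using leg unfolding legendre_full_def by blast
  have rr: "r * r = 1" using r by auto
  have shift: "gphi x - r *\<^sub>R (w + r *\<^sub>R gphi x) = - r *\<^sub>R w" for w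
    using rr by (simp add: algebra_simps)
  have "{gphi x - r *\<^sub>R v | v. v \<in> limiting_subdiff f x}
      = (\<lambda>w. gphi x - r *\<^sub>R (w + r *\<^sub>R gphi x)) ` C"
    unfolding limiting_subdiff_bregman[OF leg cv] C_def by blast
  also have "\<dots> = (\<lambda>w. - r *\<^sub>R w) ` C" unfolding shift ..
  finally have "inv gphi ` {gphi x - r *\<^sub>R v | v. v \<in> limiting_subdiff f x}
      = (\<lambda>w. inv gphi (- r *\<^sub>R w)) ` C" by (simp add: image_image)
  also have "\<dots> = {y. - r *\<^sub>R gphi y \<in> C}"
  proof (intro set_eqI iffI)
    fix y assume "y \<in> (\<lambda>w. inv gphi (- r *\<^sub>R w)) ` C"
    then obtain w where "w \<in> C" "y = inv gphi (- r *\<^sub>R w)" by blast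
    moreover have "- r *\<^sub>R gphi (inv gphi (- r *\<^sub>R w)) = w"
      using rr bij by (simp add: bij_is_surj surj_f_inv_f)
    ultimately show "y \<in> {y. - r *\<^sub>R gphi y \<in> C}" by simp
  next
    fix y assume "y \<in> {y. - r *\<^sub>R gphi y \<in> C}"
    moreover have "y = inv gphi (- r *\<^sub>R (- r *\<^sub>R gphi y))"
      using rr bij by (simp add: bij_is_inj)
    ultimately show "y \<in> (\<lambda>w. inv gphi (- r *\<^sub>R w)) ` C" by blast
  qed
  finally show ?thesis unfolding Phi_subdiff_bregman[where f=f and x=x, OF fx] C_def ..
qed

lemma is_sup_of_affine_minorants_if_Phi_subdiff_eq:
  fixes f :: "'a::euclidean_space \<Rightarrow> ereal"
  assumes leg: "legendre_full phi gphi" and r: "r = -1 \<or> r = 1" and proper: "proper_fun f"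
    and lsc: "lsc_fun f"
    and eq: "\<And>x. Phi_subdiff (\<lambda>x y. r * bregman phi gphi x y) f x
       = inv gphi ` {gphi x - r *\<^sub>R v | v. v \<in> limiting_subdiff f x}"
  shows "is_sup_of_minorants affine_fun (\<lambda>z. f z - ereal (r * phi z))"
proof -
  define g where "g z = f z - ereal (r * phi z)" for z
  have nm: "f z \<noteq> -\<infinity>" for z using proper unfolding proper_fun_def by blast
  obtain p where p: "f p \<noteq> \<infinity>" using proper unfolding proper_fun_def by blast
  have bij: "bij gphi" and der: "\<And>x. (phi has_derivative (\<lambda>h. gphi x \<bullet> h)) (at x)"
    using leg unfolding legendre_full_def by blast+
  have rr: "r * r = 1" using r by auto
  have "g = (\<lambda>z. f z + ereal (- (r * phi z)))" unfolding g_def by (intro ext) (simp add: minus_ereal_def)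
  then have "lsc_fun g"
    using legendre_full_continuous[OF leg] by (simp add: lsc_fun_add_continuous[OF lsc] continuous_intros)
  moreover have "frechet_subdiff g x \<subseteq> convex_subdiff g x" for x
  proof
    fix w assume "w \<in> frechet_subdiff g x"
    then have "w + r *\<^sub>R gphi x \<in> frechet_subdiff (\<lambda>z. g z + ereal (r * phi z)) x"
      using has_derivative_mult_right[OF der, of r]
      by (intro frechet_subdiff_add_differentiable) (simp_all add: inner_scaleR_left)
    then have "w + r *\<^sub>R gphi x \<in> limiting_subdiff f x"
      using frechet_subdiff_subset_limiting_subdiff unfolding g_def ereal_diff_add_real by blast
    moreover have "- r *\<^sub>R w = gphi x - r *\<^sub>R (w + r *\<^sub>R gphi x)"
      using rr by (simp add: algebra_simps)
    ultimately have "- r *\<^sub>R w \<in> {gphi x - r *\<^sub>R v | v. v \<in> limiting_subdiff f x}" by blast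
    then have "inv gphi (- r *\<^sub>R w) \<in> Phi_subdiff (\<lambda>x y. r * bregman phi gphi x y) f x"
      unfolding eq by (rule imageI)
    then have "- r *\<^sub>R gphi (inv gphi (- r *\<^sub>R w)) \<in> convex_subdiff g x"
      unfolding Phi_subdiff_bregman[where f=f and x=x, OF nm] g_def by simp
    then show "w \<in> convex_subdiff g x"
      using rr bij by (simp add: bij_is_surj surj_f_inv_f)
  qed
  moreover have "g z \<noteq> -\<infinity>" "g p \<noteq> \<infinity>" for z
    using nm[of z] p unfolding g_def by (cases "f z"; cases "f p"; simp)+
  ultimately show ?thesis
    unfolding g_def[abs_def, symmetric] by (intro is_sup_of_affine_minorants_if_frechet_subdiff_convex)
qed

lemma lsc_convex_if_sup_of_affine_minorants:
  fixes f :: "'a::euclidean_space \<Rightarrow> ereal"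
  assumes leg: "legendre_full phi gphi"
    and minor: "is_sup_of_minorants affine_fun (\<lambda>z. f z - ereal (r * phi z))"
  shows "lsc_fun f \<and> ext_convex (\<lambda>z. f z - ereal (r * phi z))"
proof -
  define S where "S = {p. \<forall>z. affine_fun p z \<le> f z - ereal (r * phi z)}"
  have g_eq: "(\<lambda>z. f z - ereal (r * phi z)) = (\<lambda>x. SUP p\<in>S. affine_fun p x)"
    using minor unfolding is_sup_of_minorants_def S_def by blast
  have "continuous_on UNIV phi" by (rule legendre_full_continuous[OF leg])
  moreover have "lsc_fun (\<lambda>z. f z - ereal (r * phi z))"
    unfolding g_eq by (rule lsc_fun_SUP_affine_fun)
  ultimately have "lsc_fun (\<lambda>z. f z - ereal (r * phi z) + ereal (r * phi z))"
    by (intro lsc_fun_add_continuous continuous_intros)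
  then show ?thesis unfolding ereal_diff_add_real g_eq by (simp add: ext_convex_SUP_affine_fun)
qed

theorem mainTheorem5:
  fixes phi :: "'a::euclidean_space \<Rightarrow> real"
    and gphi :: "'a \<Rightarrow> 'a"
    and r :: real
    and f :: "'a \<Rightarrow> ereal"
  assumes leg: "legendre_full phi gphi"
    and r: "r = -1 \<or> r = 1"
    and proper: "proper_fun f"
  defines "Phi \<equiv> \<lambda>x y. r * bregman phi gphi x y"
  shows
   "((lsc_fun f \<and> ext_convex (\<lambda>x. f x - ereal (r * phi x)))
       \<longleftrightarrow> left_Phi_convex Phi f)
  \<and> (left_Phi_convex Phi f \<longleftrightarrow>
       (if r = -1 then f = (\<lambda>x. - benv phi gphi (\<lambda>y. - fenv phi gphi f y) x)
        else f = bklee phi gphi (fklee phi gphi f)))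
  \<and> ((if r = -1 then f = (\<lambda>x. - benv phi gphi (\<lambda>y. - fenv phi gphi f y) x)
        else f = bklee phi gphi (fklee phi gphi f)) \<longleftrightarrow>
       (\<exists>g :: 'a \<Rightarrow> ereal.
          if r = -1 then f = (\<lambda>x. - benv phi gphi g x) else f = bklee phi gphi g))
  \<and> ((\<exists>g :: 'a \<Rightarrow> ereal.
          if r = -1 then f = (\<lambda>x. - benv phi gphi g x) else f = bklee phi gphi g) \<longleftrightarrow>
       (\<forall>x. f x = (SUP p\<in>{(v, \<delta>). \<forall>z. ereal (r * phi z + v \<bullet> z) + \<delta> \<le> f z}.
                      ereal (r * phi x + fst p \<bullet> x) + snd p)))
  \<and> ((\<forall>x. f x = (SUP p\<in>{(v, \<delta>). \<forall>z. ereal (r * phi z + v \<bullet> z) + \<delta> \<le> f z}.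
                      ereal (r * phi x + fst p \<bullet> x) + snd p)) \<longleftrightarrow>
       (lsc_fun f \<and>
        (\<forall>x. Phi_subdiff Phi f x =
               inv gphi ` {gphi x - r *\<^sub>R v | v. v \<in> limiting_subdiff f x})))"
    (is "(?I \<longleftrightarrow> ?II) \<and> (?II \<longleftrightarrow> ?III) \<and> (?III \<longleftrightarrow> ?IV) \<and> (?IV \<longleftrightarrow> ?V) \<and> (?V \<longleftrightarrow> ?VI)")
proof -
  have nm: "\<And>x. f x \<noteq> -\<infinity>" using proper unfolding proper_fun_def by blast
  have bij: "bij gphi" using leg unfolding legendre_full_def by blast
  have V_minor: "?V \<longleftrightarrow> is_sup_of_minorants (\<lambda>p x. ereal (r * phi x + fst p \<bullet> x) + snd p) f"
    unfolding is_sup_of_minorants_def by (simp add: case_prod_unfold)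
  have II_V: "?II \<longleftrightarrow> ?V"
    unfolding V_minor Phi_def left_Phi_convex_iff_sup_of_minorants
    by (rule is_sup_of_minorants_cong_range[OF range_bregman_minorants[OF bij r]])
  have V_affine: "?V \<longleftrightarrow> is_sup_of_minorants affine_fun (\<lambda>x. f x - ereal (r * phi x))"
    unfolding V_minor by (rule is_sup_of_minorants_shift)
  have II_III: "?II \<longleftrightarrow> ?III"
    unfolding bregman_biconj_iff_left_conj_right_conj[OF r] Phi_def
    by (rule left_Phi_convex_iff_eq_left_conj_right_conj)
  have II_IV: "?II \<longleftrightarrow> ?IV"
    unfolding bregman_envelope_iff_left_conj[OF r] Phi_def by (rule left_Phi_convex_iff_ex_left_conj)
  have "?V \<Longrightarrow> ?I" using lsc_convex_if_sup_of_affine_minorants[OF leg] V_affine by blast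
  moreover have "?I \<Longrightarrow> ?VI"
    using Phi_subdiff_bregman_eq_limiting[OF leg r, where f=f, OF nm] unfolding Phi_def by blast
  moreover have "?VI \<Longrightarrow> ?V"
    using is_sup_of_affine_minorants_if_Phi_subdiff_eq[OF leg r proper] V_affine unfolding Phi_def by blast
  ultimately show ?thesis using II_V II_III II_IV by blast
qed

end
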